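(* Let $\Gamma$ be a uniform layered graph with unique minimal vertex. Then $B(\Gamma)\cong(\operatorname{gr}A(\Gamma))^!$, the isomorphism being induced by $v^*\mapsto v$ for $v\in V_+$.
   Context: A layered graph is a finite directed graph $\Gamma=(V,E)$ with $V=\bigsqcup_{i=0}^{N}V_i$ such that every edge from $V_i$ goes to $V_{i-1}$; $V_+=\bigsqcup_{i\ge1}V_i$, $V_{\ge k}=\bigsqcup_{i\ge k}V_i$, $S(v)=\{w:(v,w)\in E\}$, nonempty for $v\in V_+$, $|V_0|=1$. $\Gamma$ is uniform if for every $v\in V_{\ge2}$ the elements of $S(v)$ form a single class under the transitive closure of $w\approx u$ iff $S(w)\cap S(u)\neq\emptyset$. For such $\Gamma$ one has $\operatorname{gr}A(\Gamma)\cong T(W)/\langle R\rangle$ with $W=\operatorname{span}V_+$ and $R=\operatorname{span}\{v\otimes(u-w): v\in V_{\ge2}, u,w\in S(v)\}\subseteq W\otimes W$. For a quadratic algebra $T(W)/\langle R\rangle$, its quadratic dual is $T(W^* )/\langle R^\perp\rangle$, where $R^\perp\subseteq W^*\otimes W^*$ is the set of elements annihilating $R$ under the pairing $\langle x\otimes y,v\otimes w\rangle=x(v)y(w)$; $\{v^*\}$ is the dual basis to $V_+$. $B(\Gamma)=T(V_+)/R_B$ over a field $\mathbb F$, where $R_B$ is the two-sided ideal generated by $\{vw: v,w\in V_+,(v,w)\notin E\}\cup\{v\sum_{w\in S(v)}w: v\in V_{\ge2}\}$. *)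

theory Defs
  imports "HOL-Algebra.QuotRing"
begin

definition layer :: "'v set \<Rightarrow> ('v \<Rightarrow> nat) \<Rightarrow> nat \<Rightarrow> 'v set" where
  "layer V lev i = {v \<in> V. lev v = i}"

definition Vplus :: "'v set \<Rightarrow> ('v \<Rightarrow> nat) \<Rightarrow> 'v set" where
  "Vplus V lev = {v \<in> V. 1 \<le> lev v}"

definition Vge :: "'v set \<Rightarrow> ('v \<Rightarrow> nat) \<Rightarrow> nat \<Rightarrow> 'v set" where
  "Vge V lev k = {v \<in> V. k \<le> lev v}"

definition succs :: "('v \<times> 'v) set \<Rightarrow> 'v \<Rightarrow> 'v set" where
  "succs E v = {w. (v, w) \<in> E}"

definition layered_graph :: "'v set \<Rightarrow> ('v \<times> 'v) set \<Rightarrow> ('v \<Rightarrow> nat) \<Rightarrow> bool" where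
  "layered_graph V E lev \<longleftrightarrow>
     finite V \<and> E \<subseteq> V \<times> V \<and>
     (\<forall>(v, w) \<in> E. lev v = lev w + 1) \<and>
     (\<forall>v \<in> Vplus V lev. succs E v \<noteq> {}) \<and>
     card (layer V lev 0) = 1"

definition approx_rel :: "('v \<times> 'v) set \<Rightarrow> 'v \<Rightarrow> 'v \<Rightarrow> bool" where
  "approx_rel E w u \<longleftrightarrow> succs E w \<inter> succs E u \<noteq> {}"

definition uniform :: "'v set \<Rightarrow> ('v \<times> 'v) set \<Rightarrow> ('v \<Rightarrow> nat) \<Rightarrow> bool" where
  "uniform V E lev \<longleftrightarrow>
     (\<forall>v \<in> Vge V lev 2. \<forall>u \<in> succs E v. \<forall>w \<in> succs E v.
        (u, w) \<in> ({(a, b). a \<in> succs E v \<and> b \<in> succs E v \<and> approx_rel E a b})\<^sup>*)"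

text \<open>T(span X): elements are finitely supported functions from words over X to the field;
  multiplication is concatenation convolution.\<close>

definition fa_carrier :: "'a set \<Rightarrow> ('a list \<Rightarrow> 'k::field) set" where
  "fa_carrier X = {f. finite {w. f w \<noteq> 0} \<and> (\<forall>w. f w \<noteq> 0 \<longrightarrow> set w \<subseteq> X)}"

definition fa_mult :: "('a list \<Rightarrow> 'k::field) \<Rightarrow> ('a list \<Rightarrow> 'k) \<Rightarrow> 'a list \<Rightarrow> 'k" where
  "fa_mult f g = (\<lambda>w. \<Sum>i\<le>length w. f (take i w) * g (drop i w))"

definition free_alg :: "'a set \<Rightarrow> ('a list \<Rightarrow> 'k::field) ring" where
  "free_alg X = \<lparr>carrier = fa_carrier X, mult = fa_mult,
      one = (\<lambda>w. if w = [] then 1 else 0), zero = (\<lambda>_. 0),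
      add = (\<lambda>f g w. f w + g w)\<rparr>"

definition mon :: "'a list \<Rightarrow> 'a list \<Rightarrow> 'k::field" where
  "mon w = (\<lambda>u. if u = w then 1 else 0)"

definition fa_const :: "'k::field \<Rightarrow> 'a list \<Rightarrow> 'k" where
  "fa_const c = (\<lambda>u. if u = [] then c else 0)"

definition lin_span :: "('a list \<Rightarrow> 'k::field) set \<Rightarrow> ('a list \<Rightarrow> 'k) set" where
  "lin_span G = {f. \<exists>A c. finite A \<and> A \<subseteq> G \<and> f = (\<lambda>w. \<Sum>g\<in>A. c g * g w)}"

definition tensor2 :: "'a set \<Rightarrow> ('a list \<Rightarrow> 'k::field) set" where
  "tensor2 X = {f. \<forall>w. f w \<noteq> 0 \<longrightarrow> (\<exists>a b. w = [a, b] \<and> a \<in> X \<and> b \<in> X)}"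

definition Rrel :: "'v set \<Rightarrow> ('v \<times> 'v) set \<Rightarrow> ('v \<Rightarrow> nat) \<Rightarrow> ('v list \<Rightarrow> 'k::field) set" where
  "Rrel V E lev = lin_span {(\<lambda>x. mon [v, u] x - mon [v, w] x) | v u w.
       v \<in> Vge V lev 2 \<and> u \<in> succs E v \<and> w \<in> succs E v}"

text \<open>Dual basis vectors v* are represented by the tagged letters Dual v.\<close>
datatype 'v dualv = Dual 'v

definition pair2 :: "'v set \<Rightarrow> ('v dualv list \<Rightarrow> 'k::field) \<Rightarrow> ('v list \<Rightarrow> 'k) \<Rightarrow> 'k" where
  "pair2 Vp X r = (\<Sum>a\<in>Vp. \<Sum>b\<in>Vp. X [Dual a, Dual b] * r [a, b])"

definition Rperp :: "'v set \<Rightarrow> ('v \<times> 'v) set \<Rightarrow> ('v \<Rightarrow> nat) \<Rightarrow> ('v dualv list \<Rightarrow> 'k::field) set" where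
  "Rperp V E lev = {X \<in> tensor2 (Dual ` Vplus V lev).
       \<forall>r \<in> Rrel V E lev. pair2 (Vplus V lev) X r = (0::'k)}"

definition dual_ideal :: "'v set \<Rightarrow> ('v \<times> 'v) set \<Rightarrow> ('v \<Rightarrow> nat) \<Rightarrow> ('v dualv list \<Rightarrow> 'k::field) set" where
  "dual_ideal V E lev = genideal (free_alg (Dual ` Vplus V lev)) (Rperp V E lev)"

definition quad_dual :: "'v set \<Rightarrow> ('v \<times> 'v) set \<Rightarrow> ('v \<Rightarrow> nat) \<Rightarrow> ('v dualv list \<Rightarrow> 'k::field) set ring" where
  "quad_dual V E lev = free_alg (Dual ` Vplus V lev) Quot dual_ideal V E lev"

definition RB_gens :: "'v set \<Rightarrow> ('v \<times> 'v) set \<Rightarrow> ('v \<Rightarrow> nat) \<Rightarrow> ('v list \<Rightarrow> 'k::field) set" where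
  "RB_gens V E lev =
     {mon [v, w] | v w. v \<in> Vplus V lev \<and> w \<in> Vplus V lev \<and> (v, w) \<notin> E} \<union>
     {(\<lambda>x. \<Sum>w\<in>succs E v. mon [v, w] x) | v. v \<in> Vge V lev 2}"

definition RB :: "'v set \<Rightarrow> ('v \<times> 'v) set \<Rightarrow> ('v \<Rightarrow> nat) \<Rightarrow> ('v list \<Rightarrow> 'k::field) set" where
  "RB V E lev = genideal (free_alg (Vplus V lev)) (RB_gens V E lev)"

definition B_alg :: "'v set \<Rightarrow> ('v \<times> 'v) set \<Rightarrow> ('v \<Rightarrow> nat) \<Rightarrow> ('v list \<Rightarrow> 'k::field) set ring" where
  "B_alg V E lev = free_alg (Vplus V lev) Quot RB V E lev"

end

theory Submission
  imports Defs
begin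

(* Renaming the letters v^* to v is an isomorphism of free algebras, so it suffices that it
   carries R^perp onto a generating set of the ideal R_B. A quadratic tensor X annihilates R
   exactly when, for every v in V_(>=2), its coefficient at the word v^* u^* does not depend
   on u in S(v). Every generator of R_B has this property; conversely such an X splits, row
   by row, into multiples of monomials v w with (v, w) not in E and of the sums
   v (sum of w in S(v)); vertices of level 1 have no successors in V_+. *)

lemma image_a_r_coset:
  assumes "\<And>x y. h (x \<oplus>\<^bsub>R\<^esub> y) = h x \<oplus>\<^bsub>S\<^esub> h y"
  shows "h ` (I +>\<^bsub>R\<^esub> a) = (h ` I) +>\<^bsub>S\<^esub> h a"
  unfolding a_r_coset_def' using assms by (simp add: image_UN)

lemma FactRing_image_ring_iso:
  assumes inj: "inj h"
    and mult: "\<And>x y. h (x \<otimes>\<^bsub>R\<^esub> y) = h x \<otimes>\<^bsub>S\<^esub> h y"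
    and add: "\<And>x y. h (x \<oplus>\<^bsub>R\<^esub> y) = h x \<oplus>\<^bsub>S\<^esub> h y"
    and one: "h \<one>\<^bsub>R\<^esub> = \<one>\<^bsub>S\<^esub>"
    and carrier: "h ` carrier R = carrier S"
    and ideal: "h ` I = J"
  shows "(\<lambda>A. h ` A) \<in> ring_iso (R Quot I) (S Quot J)"
proof (rule ring_iso_memI)
  have coset: "\<And>x. h ` (I +>\<^bsub>R\<^esub> x) = J +>\<^bsub>S\<^esub> h x"
    using image_a_r_coset[of h R S, OF add] ideal by simp
  show "h ` x \<in> carrier (S Quot J)" if "x \<in> carrier (R Quot I)" for x
    using that carrier coset unfolding FactRing_def A_RCOSETS_def' by simp blast
  show "h ` (x \<otimes>\<^bsub>R Quot I\<^esub> y) = h ` x \<otimes>\<^bsub>S Quot J\<^esub> h ` y" for x y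
  proof -
    have "h ` (x \<otimes>\<^bsub>R Quot I\<^esub> y) = (\<Union>a\<in>x. \<Union>b\<in>y. h ` (I +>\<^bsub>R\<^esub> (a \<otimes>\<^bsub>R\<^esub> b)))"
      unfolding FactRing_def rcoset_mult_def by (simp add: image_UN)
    also have "\<dots> = (\<Union>a\<in>x. \<Union>b\<in>y. J +>\<^bsub>S\<^esub> (h a \<otimes>\<^bsub>S\<^esub> h b))"
      using coset mult by simp
    also have "\<dots> = h ` x \<otimes>\<^bsub>S Quot J\<^esub> h ` y"
      unfolding FactRing_def rcoset_mult_def by simp
    finally show ?thesis .
  qed
  show "h ` (x \<oplus>\<^bsub>R Quot I\<^esub> y) = h ` x \<oplus>\<^bsub>S Quot J\<^esub> h ` y" for x y
    unfolding FactRing_def set_add_def' using add by (auto simp: image_UN)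
  show "h ` \<one>\<^bsub>R Quot I\<^esub> = \<one>\<^bsub>S Quot J\<^esub>"
    unfolding FactRing_def using coset one by simp
  show "bij_betw ((`) h) (carrier (R Quot I)) (carrier (S Quot J))"
  proof (rule bij_betw_imageI)
    show "inj_on ((`) h) (carrier (R Quot I))"
      using inj by (meson inj_image_eq_iff inj_onI)
    show "(`) h ` carrier (R Quot I) = carrier (S Quot J)"
      using carrier coset unfolding FactRing_def A_RCOSETS_def'
      by (auto simp: image_UN) (metis (no_types, lifting) image_iff)
  qed
qed

lemma ideal_image_ring_iso:
  assumes I: "ideal I R" and h: "h \<in> ring_iso R S" and h': "h' \<in> ring_hom S R"
    and inv1: "\<And>x. h' (h x) = x" and inv2: "\<And>y. h (h' y) = y"
    and zero: "h \<zero>\<^bsub>R\<^esub> = \<zero>\<^bsub>S\<^esub>"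
  shows "ideal (h ` I) S"
proof -
  have "ring R" using I unfolding ideal_def by auto
  then have "ring (S \<lparr> zero := h \<zero>\<^bsub>R\<^esub> \<rparr>)" by (rule ring.ring_iso_imp_img_ring[OF _ h])
  then have "ring S" using zero by simp
  with \<open>ring R\<close> h' have hom: "ring_hom_ring S R h'" by (simp add: ring_hom_ringI2)
  have "I \<subseteq> carrier R" using I ideal.axioms(1) additive_subgroup.a_subset by blast
  have "{r \<in> carrier S. h' r \<in> I} = h ` I"
  proof
    show "{r \<in> carrier S. h' r \<in> I} \<subseteq> h ` I" using inv2 by (auto, metis image_eqI)
    show "h ` I \<subseteq> {r \<in> carrier S. h' r \<in> I}"
      using \<open>I \<subseteq> carrier R\<close> inv1 ring_iso_memE(1)[OF h] by auto
  qed
  then show ?thesis using ring_hom_ring.ideal_vimage[OF hom I] by simp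
qed

lemma genideal_image_ring_iso:
  assumes h: "h \<in> ring_iso R S" and h': "h' \<in> ring_iso S R"
    and inv1: "\<And>x. h' (h x) = x" and inv2: "\<And>y. h (h' y) = y"
    and zero: "h \<zero>\<^bsub>R\<^esub> = \<zero>\<^bsub>S\<^esub>" and zero': "h' \<zero>\<^bsub>S\<^esub> = \<zero>\<^bsub>R\<^esub>"
  shows "h ` genideal R T = genideal S (h ` T)"
proof -
  have hom: "h \<in> ring_hom R S" "h' \<in> ring_hom S R" using h h' unfolding ring_iso_def by auto
  have image_eq_vimage: "h ` A = h' -` A" for A using inv1 inv2 by (auto, metis image_eqI)
  have "{J. ideal J S \<and> h ` T \<subseteq> J} = (\<lambda>I. h ` I) ` {I. ideal I R \<and> T \<subseteq> I}"
  proof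
    show "{J. ideal J S \<and> h ` T \<subseteq> J} \<subseteq> (\<lambda>I. h ` I) ` {I. ideal I R \<and> T \<subseteq> I}"
    proof
      fix J assume J: "J \<in> {J. ideal J S \<and> h ` T \<subseteq> J}"
      have "ideal (h' ` J) R" using J ideal_image_ring_iso[OF _ h' hom(1) inv2 inv1 zero'] by auto
      moreover have "T \<subseteq> h' ` J" using J inv1 by (auto, metis image_eqI subsetD)
      moreover have "J = h ` (h' ` J)" using inv2 by (simp add: image_image)
      ultimately show "J \<in> (\<lambda>I. h ` I) ` {I. ideal I R \<and> T \<subseteq> I}" by blast
    qed
    show "(\<lambda>I. h ` I) ` {I. ideal I R \<and> T \<subseteq> I} \<subseteq> {J. ideal J S \<and> h ` T \<subseteq> J}"
      using ideal_image_ring_iso[OF _ h hom(2) inv1 inv2 zero] by auto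
  qed
  moreover have "h ` (\<Inter>F) = (\<Inter>I\<in>F. h ` I)" for F unfolding image_eq_vimage by auto
  ultimately show ?thesis unfolding genideal_def by (simp add: image_image)
qed

lemma genideal_not_ring: "\<not> ring R \<Longrightarrow> genideal R T = UNIV"
  unfolding genideal_def ideal_def by auto

definition relabel :: "('a \<Rightarrow> 'b) \<Rightarrow> ('b list \<Rightarrow> 'k) \<Rightarrow> 'a list \<Rightarrow> 'k" where
  "relabel \<sigma> f = (\<lambda>w. f (map \<sigma> w))"

lemma relabel_free_alg_mult:
  "relabel \<sigma> (f \<otimes>\<^bsub>free_alg Y\<^esub> g) = relabel \<sigma> f \<otimes>\<^bsub>free_alg X\<^esub> relabel \<sigma> g"
  unfolding free_alg_def relabel_def fa_mult_def by (simp add: take_map drop_map)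

lemma relabel_free_alg_add:
  "relabel \<sigma> (f \<oplus>\<^bsub>free_alg Y\<^esub> g) = relabel \<sigma> f \<oplus>\<^bsub>free_alg X\<^esub> relabel \<sigma> g"
  unfolding free_alg_def relabel_def by simp

lemma relabel_fa_carrier:
  assumes "inj \<sigma>" "f \<in> fa_carrier (\<sigma> ` X)"
  shows "relabel \<sigma> f \<in> fa_carrier X"
proof -
  have "finite {w. f w \<noteq> 0}" using assms(2) by (simp add: fa_carrier_def)
  moreover have "inj (map \<sigma>)" using assms(1) by (rule inj_mapI)
  ultimately have "finite (map \<sigma> -` {w. f w \<noteq> 0})" by (rule finite_vimageI)
  moreover have "{w. relabel \<sigma> f w \<noteq> 0} = map \<sigma> -` {w. f w \<noteq> 0}"
    by (simp add: relabel_def vimage_def)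
  ultimately have "finite {w. relabel \<sigma> f w \<noteq> 0}" by simp
  moreover have "set w \<subseteq> X" if "relabel \<sigma> f w \<noteq> 0" for w
  proof -
    have "set (map \<sigma> w) \<subseteq> \<sigma> ` X"
      using that assms(2) unfolding relabel_def fa_carrier_def by blast
    then show ?thesis using assms(1) by (simp add: inj_image_subset_iff)
  qed
  ultimately show ?thesis unfolding fa_carrier_def by blast
qed

lemma relabel_ring_iso:
  assumes inv: "\<And>x. \<tau> (\<sigma> x) = x" "\<And>y. \<sigma> (\<tau> y) = y"
  shows "relabel \<sigma> \<in> ring_iso (free_alg (\<sigma> ` X) :: ('b list \<Rightarrow> 'k::field) ring) (free_alg X)"
proof (rule ring_iso_memI)
  have inj: "inj \<sigma>" "inj \<tau>" using inv by (metis injI)+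
  have "\<tau> ` \<sigma> ` X = X" using inv by (simp add: image_image)
  then have pull_back: "relabel \<tau> g \<in> fa_carrier (\<sigma> ` X)"
    if "g \<in> fa_carrier X" for g :: "'a list \<Rightarrow> 'k"
    using relabel_fa_carrier[OF inj(2), of g "\<sigma> ` X"] that by simp
  have "relabel \<tau> (relabel \<sigma> f) = f" "relabel \<sigma> (relabel \<tau> g) = g" for f g :: "_ \<Rightarrow> 'k"
    by (simp_all add: relabel_def comp_def inv)
  with pull_back relabel_fa_carrier[OF inj(1)]
  show "bij_betw (relabel \<sigma>) (carrier (free_alg (\<sigma> ` X) :: ('b list \<Rightarrow> 'k) ring))
      (carrier (free_alg X))"
    unfolding free_alg_def by (intro bij_betw_byWitness[where f' = "relabel \<tau>"]) auto
  show "relabel \<sigma> f \<in> carrier (free_alg X)" if "f \<in> carrier (free_alg (\<sigma> ` X))" for f :: "'b list \<Rightarrow> 'k"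
    using that relabel_fa_carrier[OF inj(1)] by (simp add: free_alg_def)
qed (simp_all add: relabel_free_alg_mult relabel_free_alg_add, simp add: free_alg_def relabel_def)

lemma fa_mult_fa_const: "fa_mult (fa_const c) g = (\<lambda>w. c * g w)"
proof
  fix w :: "'a list"
  have "fa_mult (fa_const c) g w = (\<Sum>i\<le>length w. if i = 0 then c * g w else 0)"
    unfolding fa_mult_def fa_const_def by (intro sum.cong refl) auto
  then show "fa_mult (fa_const c) g w = c * g w" by simp
qed

lemma fa_const_carrier: "fa_const c \<in> fa_carrier X"
proof -
  have "{w. fa_const c w \<noteq> 0} \<subseteq> {[]}" unfolding fa_const_def by auto
  then show ?thesis unfolding fa_carrier_def fa_const_def by (auto intro: finite_subset)
qed

lemma free_alg_ideal_smult:
  fixes g :: "'a list \<Rightarrow> 'k::field"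
  assumes "ideal I (free_alg X)" "g \<in> I"
  shows "(\<lambda>w. c * g w) \<in> I"
proof -
  have "fa_const c \<in> carrier (free_alg X :: ('a list \<Rightarrow> 'k) ring)"
    by (simp add: free_alg_def fa_const_carrier)
  then have "fa_const c \<otimes>\<^bsub>free_alg X\<^esub> g \<in> I" by (rule ideal.I_l_closed[OF assms])
  then show ?thesis unfolding free_alg_def by (simp add: fa_mult_fa_const)
qed

lemma free_alg_ideal_add:
  fixes f g :: "'a list \<Rightarrow> 'k::field"
  assumes "ideal I (free_alg X)" "f \<in> I" "g \<in> I"
  shows "(\<lambda>w. f w + g w) \<in> I"
  using additive_subgroup.a_closed[OF ideal.axioms(1)[OF assms(1)] assms(2,3)]
  by (simp add: free_alg_def)

lemma free_alg_ideal_sum: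
  fixes f :: "'b \<Rightarrow> 'a list \<Rightarrow> 'k::field"
  assumes I: "ideal I (free_alg X)" and "finite K" "\<And>i. i \<in> K \<Longrightarrow> f i \<in> I"
  shows "(\<lambda>w. \<Sum>i\<in>K. f i w) \<in> I"
  using assms(2,3)
proof (induction K rule: finite_induct)
  case empty
  show ?case using additive_subgroup.zero_closed[OF ideal.axioms(1)[OF I]]
    by (simp add: free_alg_def)
next
  case (insert i K)
  then show ?case using free_alg_ideal_add[OF I, of "f i" "\<lambda>w. \<Sum>i\<in>K. f i w"] by simp
qed

lemma mon_Cons_Cons: "mon [a, b] [x, y] = (if a = x \<and> b = y then 1 else 0)"
  unfolding mon_def by auto

lemma quadratic_expansion:
  fixes Y :: "'a list \<Rightarrow> 'k::field"
  assumes fin: "finite A" and supp: "\<And>w. Y w \<noteq> 0 \<Longrightarrow> \<exists>a b. w = [a, b] \<and> a \<in> A \<and> b \<in> A"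
  shows "Y = (\<lambda>w. \<Sum>a\<in>A. \<Sum>b\<in>A. Y [a, b] * mon [a, b] w)"
proof
  fix w
  show "Y w = (\<Sum>a\<in>A. \<Sum>b\<in>A. Y [a, b] * mon [a, b] w)"
  proof (cases "\<exists>x y. w = [x, y] \<and> x \<in> A \<and> y \<in> A")
    case True
    then obtain x y where w: "w = [x, y]" "x \<in> A" "y \<in> A" by blast
    have "(\<Sum>a\<in>A. \<Sum>b\<in>A. Y [a, b] * mon [a, b] w) =
        (\<Sum>a\<in>A. \<Sum>b\<in>A. if a = x \<and> b = y then Y [a, b] else 0)"
      unfolding w(1) mon_Cons_Cons by (intro sum.cong refl) auto
    also have "\<dots> = (\<Sum>a\<in>A. if a = x then Y [a, y] else 0)"
      using w fin by (intro sum.cong refl) (auto simp: sum.delta)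
    also have "\<dots> = Y w" using w fin by simp
    finally show ?thesis by simp
  next
    case False
    then have "Y w = 0" using supp by blast
    moreover have "mon [a, b] w = (0::'k)" if "a \<in> A" "b \<in> A" for a b
      using False that unfolding mon_def by auto
    ultimately show ?thesis by simp
  qed
qed

fun undual :: "'v dualv \<Rightarrow> 'v" where
  "undual (Dual v) = v"

lemma Dual_undual [simp]: "Dual (undual x) = x"
  by (cases x) simp

lemma finite_Vplus: "layered_graph V E lev \<Longrightarrow> finite (Vplus V lev)"
  unfolding layered_graph_def Vplus_def by auto

lemma Vge_2_subset_Vplus: "Vge V lev 2 \<subseteq> Vplus V lev"
  unfolding Vge_def Vplus_def by auto

lemma succs_subset_Vplus:
  "layered_graph V E lev \<Longrightarrow> a \<in> Vge V lev 2 \<Longrightarrow> succs E a \<subseteq> Vplus V lev"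
  unfolding layered_graph_def Vplus_def Vge_def succs_def by fastforce

lemma finite_succs: "layered_graph V E lev \<Longrightarrow> finite (succs E a)"
  unfolding layered_graph_def succs_def by (auto intro: finite_subset)

lemma Vplus_Int_succs_level_1:
  "layered_graph V E lev \<Longrightarrow> a \<in> Vplus V lev \<Longrightarrow> a \<notin> Vge V lev 2 \<Longrightarrow>
    Vplus V lev \<inter> succs E a = {}"
  unfolding layered_graph_def Vplus_def Vge_def succs_def by fastforce

lemma pair2_mon:
  assumes "finite Vp" "v \<in> Vp" "u \<in> Vp"
  shows "pair2 Vp X (mon [v, u]) = X [Dual v, Dual u]"
proof -
  have "pair2 Vp X (mon [v, u]) = (\<Sum>a\<in>Vp. \<Sum>b\<in>Vp. if a = v \<and> b = u then X [Dual a, Dual b] else 0)"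
    unfolding pair2_def mon_Cons_Cons by (intro sum.cong refl) auto
  also have "\<dots> = (\<Sum>a\<in>Vp. if a = v then X [Dual a, Dual u] else 0)"
    using assms by (intro sum.cong refl) (auto simp: sum.delta)
  also have "\<dots> = X [Dual v, Dual u]" using assms by (simp add: sum.delta)
  finally show ?thesis .
qed

lemma pair2_diff: "pair2 Vp X (\<lambda>x. f x - g x) = pair2 Vp X f - pair2 Vp X g"
  unfolding pair2_def by (simp add: right_diff_distrib sum_subtractf)

lemma pair2_lin_comb: "pair2 Vp X (\<lambda>w. \<Sum>g\<in>A. c g * g w) = (\<Sum>g\<in>A. c g * pair2 Vp X g)"
  unfolding pair2_def by (simp add: sum_distrib_left sum.swap[of _ A] mult.left_commute)

lemma Rrel_generator_mem:
  assumes "v \<in> Vge V lev 2" "u \<in> succs E v" "w \<in> succs E v"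
  shows "(\<lambda>x. mon [v, u] x - mon [v, w] x) \<in> Rrel V E lev"
  unfolding Rrel_def lin_span_def using assms
  by (intro CollectI exI[of _ "{\<lambda>x. mon [v, u] x - mon [v, w] x}"] exI[of _ "\<lambda>_. 1"]) auto

lemma pair2_Rrel_generator:
  assumes lg: "layered_graph V E lev"
    and "v \<in> Vge V lev 2" "u \<in> succs E v" "w \<in> succs E v"
  shows "pair2 (Vplus V lev) X (\<lambda>x. mon [v, u] x - mon [v, w] x) =
    X [Dual v, Dual u] - X [Dual v, Dual w]"
proof -
  have "v \<in> Vplus V lev" "u \<in> Vplus V lev" "w \<in> Vplus V lev"
    using assms(2-4) Vge_2_subset_Vplus[of V lev] succs_subset_Vplus[OF lg] by auto
  then show ?thesis by (simp add: pair2_diff pair2_mon finite_Vplus[OF lg])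
qed

lemma mem_Rperp_iff:
  fixes X :: "'v dualv list \<Rightarrow> 'k::field"
  assumes lg: "layered_graph V E lev"
  shows "X \<in> Rperp V E lev \<longleftrightarrow> X \<in> tensor2 (Dual ` Vplus V lev) \<and>
    (\<forall>v \<in> Vge V lev 2. \<forall>u \<in> succs E v. \<forall>w \<in> succs E v. X [Dual v, Dual u] = X [Dual v, Dual w])"
    (is "_ \<longleftrightarrow> _ \<and> ?rows_const")
proof
  assume X: "X \<in> Rperp V E lev"
  have "X [Dual v, Dual u] = X [Dual v, Dual w]"
    if vuw: "v \<in> Vge V lev 2" "u \<in> succs E v" "w \<in> succs E v" for v u w
  proof -
    have "pair2 (Vplus V lev) X (\<lambda>x. mon [v, u] x - mon [v, w] x) = 0"
      using X Rrel_generator_mem[OF vuw] unfolding Rperp_def by blast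
    then show ?thesis by (simp add: pair2_Rrel_generator[OF lg vuw])
  qed
  with X show "X \<in> tensor2 (Dual ` Vplus V lev) \<and> ?rows_const"
    unfolding Rperp_def by blast
next
  assume X: "X \<in> tensor2 (Dual ` Vplus V lev) \<and> ?rows_const"
  have "pair2 (Vplus V lev) X r = 0" if r_mem: "r \<in> Rrel V E lev" for r
  proof -
    obtain A c where A: "A \<subseteq> {(\<lambda>x. mon [v, u] x - mon [v, w] x) | v u w.
        v \<in> Vge V lev 2 \<and> u \<in> succs E v \<and> w \<in> succs E v}" and r: "r = (\<lambda>w. \<Sum>g\<in>A. c g * g w)"
      using r_mem unfolding Rrel_def lin_span_def mem_Collect_eq by (elim exE conjE) (rule that)
    have "pair2 (Vplus V lev) X g = 0" if g_mem: "g \<in> A" for g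
    proof -
      obtain v u w where g: "g = (\<lambda>x. mon [v, u] x - mon [v, w] x)"
        and vuw: "v \<in> Vge V lev 2" "u \<in> succs E v" "w \<in> succs E v"
        using subsetD[OF A g_mem] by blast
      have "X [Dual v, Dual u] = X [Dual v, Dual w]" using X vuw by blast
      then show ?thesis unfolding g by (simp add: pair2_Rrel_generator[OF lg vuw])
    qed
    then show ?thesis unfolding r pair2_lin_comb by simp
  qed
  with X show "X \<in> Rperp V E lev" unfolding Rperp_def by blast
qed

lemma mon_mem_RB_gens:
  "a \<in> Vplus V lev \<Longrightarrow> b \<in> Vplus V lev \<Longrightarrow> (a, b) \<notin> E \<Longrightarrow> mon [a, b] \<in> RB_gens V E lev"
  unfolding RB_gens_def by blast

lemma row_sum_mem_RB_gens:
  "a \<in> Vge V lev 2 \<Longrightarrow> (\<lambda>x. \<Sum>w\<in>succs E a. mon [a, w] x) \<in> RB_gens V E lev"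
  unfolding RB_gens_def by blast

lemma RB_gens_support:
  fixes h :: "'v list \<Rightarrow> 'k::field"
  assumes lg: "layered_graph V E lev" and h: "h \<in> RB_gens V E lev" and nz: "h u \<noteq> 0"
  shows "\<exists>a b. u = [a, b] \<and> a \<in> Vplus V lev \<and> b \<in> Vplus V lev"
  using h
proof (unfold RB_gens_def, elim UnE CollectE exE conjE)
  fix v w assume "h = mon [v, w]" "v \<in> Vplus V lev" "w \<in> Vplus V lev"
  then show ?thesis using nz unfolding mon_def by (auto split: if_splits)
next
  fix v assume h: "h = (\<lambda>x. \<Sum>w\<in>succs E v. mon [v, w] x)" and v: "v \<in> Vge V lev 2"
  then obtain w where "w \<in> succs E v" "mon [v, w] u \<noteq> (0::'k)"
    using nz by (metis (mono_tags, lifting) sum.neutral)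
  then show ?thesis using succs_subset_Vplus[OF lg v] Vge_2_subset_Vplus[of V lev] v
    unfolding mon_def by (auto split: if_splits)
qed

lemma RB_gens_row_const:
  fixes h :: "'v list \<Rightarrow> 'k::field"
  assumes lg: "layered_graph V E lev" and h: "h \<in> RB_gens V E lev"
    and "u \<in> succs E v" "w \<in> succs E v"
  shows "h [v, u] = h [v, w]"
  using h
proof (unfold RB_gens_def, elim UnE CollectE exE conjE)
  fix a b assume "h = mon [a, b]" "(a, b) \<notin> E"
  then show ?thesis using assms(3,4) unfolding succs_def by (auto simp: mon_Cons_Cons)
next
  fix a assume "h = (\<lambda>x. \<Sum>w\<in>succs E a. mon [a, w] x)"
  then show ?thesis
    using assms(3,4) finite_succs[OF lg] by (cases "a = v") (simp_all add: mon_Cons_Cons sum.delta)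
qed

lemma RB_gens_subset_carrier:
  assumes lg: "layered_graph V E lev"
  shows "RB_gens V E lev \<subseteq> (carrier (free_alg (Vplus V lev)) :: ('v list \<Rightarrow> 'k::field) set)"
proof
  fix h :: "'v list \<Rightarrow> 'k" assume h: "h \<in> RB_gens V E lev"
  let ?Vp = "Vplus V lev"
  have "{u. h u \<noteq> 0} \<subseteq> (\<lambda>(a, b). [a, b]) ` (?Vp \<times> ?Vp)"
    using RB_gens_support[OF lg h] by force
  then have "finite {u. h u \<noteq> 0}" using finite_Vplus[OF lg] by (auto intro: finite_subset)
  moreover have "set u \<subseteq> ?Vp" if "h u \<noteq> 0" for u using RB_gens_support[OF lg h that] by auto
  ultimately show "h \<in> carrier (free_alg ?Vp)" unfolding free_alg_def fa_carrier_def by simp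
qed

lemma relabel_undual_RB_gens_mem_Rperp:
  fixes h :: "'v list \<Rightarrow> 'k::field"
  assumes lg: "layered_graph V E lev" and h: "h \<in> RB_gens V E lev"
  shows "relabel undual h \<in> Rperp V E lev"
  unfolding mem_Rperp_iff[OF lg]
proof
  show "relabel undual h \<in> tensor2 (Dual ` Vplus V lev)"
    unfolding tensor2_def
  proof (intro CollectI allI impI)
    fix w assume "relabel undual h w \<noteq> 0"
    then have "h (map undual w) \<noteq> 0" by (simp add: relabel_def)
    from RB_gens_support[OF lg h this]
    obtain a b where ab: "map undual w = [a, b]" "a \<in> Vplus V lev" "b \<in> Vplus V lev"
      by (elim exE conjE)
    have "w = map Dual (map undual w)" by (induction w) simp_all
    with ab(1) have "w = [Dual a, Dual b]" by simp
    with ab(2,3) show "\<exists>a b. w = [a, b] \<and> a \<in> Dual ` Vplus V lev \<and> b \<in> Dual ` Vplus V lev"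
      by blast
  qed
  show "\<forall>v \<in> Vge V lev 2. \<forall>u \<in> succs E v. \<forall>w \<in> succs E v.
      relabel undual h [Dual v, Dual u] = relabel undual h [Dual v, Dual w]"
  proof (intro ballI)
    fix v u w assume "u \<in> succs E v" "w \<in> succs E v"
    then have "h [v, u] = h [v, w]" by (rule RB_gens_row_const[OF lg h])
    then show "relabel undual h [Dual v, Dual u] = relabel undual h [Dual v, Dual w]"
      by (simp add: relabel_def)
  qed
qed

lemma RB_gens_subset_relabel_Rperp:
  assumes "layered_graph V E lev"
  shows "(RB_gens V E lev :: ('v list \<Rightarrow> 'k::field) set) \<subseteq> relabel Dual ` Rperp V E lev"
proof
  fix h :: "'v list \<Rightarrow> 'k" assume "h \<in> RB_gens V E lev"
  then have "relabel undual h \<in> Rperp V E lev" by (rule relabel_undual_RB_gens_mem_Rperp[OF assms])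
  moreover have "h = relabel Dual (relabel undual h)" by (simp add: relabel_def comp_def)
  ultimately show "h \<in> relabel Dual ` Rperp V E lev" by blast
qed

lemma row_mem_RB:
  fixes c :: "'v \<Rightarrow> 'k::field"
  assumes lg: "layered_graph V E lev"
    and ring: "ring (free_alg (Vplus V lev) :: ('v list \<Rightarrow> 'k) ring)"
    and a: "a \<in> Vplus V lev"
    and const: "\<And>b b'. a \<in> Vge V lev 2 \<Longrightarrow> b \<in> succs E a \<Longrightarrow> b' \<in> succs E a \<Longrightarrow> c b = c b'"
  shows "(\<lambda>w. \<Sum>b\<in>Vplus V lev. c b * mon [a, b] w) \<in> RB V E lev"
proof -
  let ?Vp = "Vplus V lev" and ?S = "succs E a"
  have I: "ideal (RB V E lev) (free_alg ?Vp :: ('v list \<Rightarrow> 'k) ring)"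
    unfolding RB_def by (rule ring.genideal_ideal[OF ring RB_gens_subset_carrier[OF lg]])
  have gen: "RB_gens V E lev \<subseteq> (RB V E lev :: ('v list \<Rightarrow> 'k) set)"
    unfolding RB_def by (rule ring.genideal_self[OF ring RB_gens_subset_carrier[OF lg]])
  have off_edges: "(\<lambda>w. \<Sum>b\<in>?Vp - ?S. c b * mon [a, b] w) \<in> RB V E lev"
  proof (rule free_alg_ideal_sum[OF I])
    show "finite (?Vp - ?S)" using finite_Vplus[OF lg] by simp
    fix b assume "b \<in> ?Vp - ?S"
    then have "mon [a, b] \<in> RB_gens V E lev"
      using a by (intro mon_mem_RB_gens) (auto simp: succs_def)
    then show "(\<lambda>w. c b * mon [a, b] w) \<in> RB V E lev"
      using gen by (intro free_alg_ideal_smult[OF I]) blast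
  qed
  have on_edges: "(\<lambda>w. \<Sum>b\<in>?Vp \<inter> ?S. c b * mon [a, b] w) \<in> RB V E lev"
  proof (cases "a \<in> Vge V lev 2")
    case True
    have "?S \<noteq> {}" using lg a by (simp add: layered_graph_def)
    then obtain b0 where b0: "b0 \<in> ?S" by blast
    have row_const: "c b = c b0" if "b \<in> ?S" for b using const[OF True that b0] .
    have S: "?Vp \<inter> ?S = ?S" using succs_subset_Vplus[OF lg True] by blast
    have "(\<lambda>w. \<Sum>b\<in>?Vp \<inter> ?S. c b * mon [a, b] w) = (\<lambda>w. c b0 * (\<Sum>b\<in>?S. mon [a, b] w))"
      unfolding S sum_distrib_left by (intro ext sum.cong refl) (metis row_const)
    also have "\<dots> \<in> RB V E lev"
      using gen row_sum_mem_RB_gens[OF True] by (intro free_alg_ideal_smult[OF I]) blast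
    finally show ?thesis .
  next
    case False
    then have "?Vp \<inter> ?S = {}" by (rule Vplus_Int_succs_level_1[OF lg a])
    then show ?thesis using free_alg_ideal_sum[OF I, of "{}"] by simp
  qed
  have "(\<lambda>w. \<Sum>b\<in>?Vp. c b * mon [a, b] w) =
      (\<lambda>w. (\<Sum>b\<in>?Vp \<inter> ?S. c b * mon [a, b] w) + (\<Sum>b\<in>?Vp - ?S. c b * mon [a, b] w))"
    by (intro ext sum.Int_Diff finite_Vplus[OF lg])
  then show ?thesis using free_alg_ideal_add[OF I on_edges off_edges] by simp
qed

lemma quadratic_mem_RB:
  fixes Y :: "'v list \<Rightarrow> 'k::field"
  assumes lg: "layered_graph V E lev"
    and ring: "ring (free_alg (Vplus V lev) :: ('v list \<Rightarrow> 'k) ring)"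
    and supp: "\<And>w. Y w \<noteq> 0 \<Longrightarrow> \<exists>a b. w = [a, b] \<and> a \<in> Vplus V lev \<and> b \<in> Vplus V lev"
    and const: "\<And>v u w. v \<in> Vge V lev 2 \<Longrightarrow> u \<in> succs E v \<Longrightarrow> w \<in> succs E v \<Longrightarrow> Y [v, u] = Y [v, w]"
  shows "Y \<in> RB V E lev"
proof -
  have I: "ideal (RB V E lev) (free_alg (Vplus V lev) :: ('v list \<Rightarrow> 'k) ring)"
    unfolding RB_def by (rule ring.genideal_ideal[OF ring RB_gens_subset_carrier[OF lg]])
  have "(\<lambda>w. \<Sum>a\<in>Vplus V lev. \<Sum>b\<in>Vplus V lev. Y [a, b] * mon [a, b] w) \<in> RB V E lev"
  proof (rule free_alg_ideal_sum[OF I finite_Vplus[OF lg]])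
    fix a assume "a \<in> Vplus V lev"
    then show "(\<lambda>w. \<Sum>b\<in>Vplus V lev. Y [a, b] * mon [a, b] w) \<in> RB V E lev"
      by (rule row_mem_RB[OF lg ring]) (rule const)
  qed
  also have "(\<lambda>w. \<Sum>a\<in>Vplus V lev. \<Sum>b\<in>Vplus V lev. Y [a, b] * mon [a, b] w) = Y"
    using quadratic_expansion[where Y = Y, OF finite_Vplus[OF lg] supp] by simp
  finally show ?thesis .
qed

lemma relabel_Rperp_subset_RB:
  assumes lg: "layered_graph V E lev"
    and ring: "ring (free_alg (Vplus V lev) :: ('v list \<Rightarrow> 'k::field) ring)"
  shows "relabel Dual ` Rperp V E lev \<subseteq> (RB V E lev :: ('v list \<Rightarrow> 'k) set)"
proof
  fix Y assume "Y \<in> relabel Dual ` (Rperp V E lev :: ('v dualv list \<Rightarrow> 'k) set)"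
  then obtain X where Y: "Y = relabel Dual X" and "X \<in> Rperp V E lev" by blast
  then have X_tensor: "X \<in> tensor2 (Dual ` Vplus V lev)"
    and X_rows: "\<forall>v \<in> Vge V lev 2. \<forall>u \<in> succs E v. \<forall>w \<in> succs E v. X [Dual v, Dual u] = X [Dual v, Dual w]"
    unfolding mem_Rperp_iff[OF lg] by blast+
  have "\<exists>a b. w = [a, b] \<and> a \<in> Vplus V lev \<and> b \<in> Vplus V lev" if "Y w \<noteq> 0" for w
  proof -
    have "X (map Dual w) \<noteq> 0" using that by (simp add: Y relabel_def)
    then have "\<exists>p q. map Dual w = [p, q] \<and> p \<in> Dual ` Vplus V lev \<and> q \<in> Dual ` Vplus V lev"
      using X_tensor unfolding tensor2_def by blast
    then show ?thesis by (auto simp: map_eq_Cons_conv)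
  qed
  moreover have "Y [v, u] = Y [v, w]" if "v \<in> Vge V lev 2" "u \<in> succs E v" "w \<in> succs E v" for v u w
  proof -
    have "X [Dual v, Dual u] = X [Dual v, Dual w]" using X_rows that by blast
    then show ?thesis by (simp add: Y relabel_def)
  qed
  ultimately show "Y \<in> RB V E lev" by (rule quadratic_mem_RB[OF lg ring])
qed

(* The case split avoids proving that the free algebra is a ring: otherwise both generated
   ideals are the whole space. *)
lemma genideal_relabel_Rperp:
  assumes lg: "layered_graph V E lev"
  shows "genideal (free_alg (Vplus V lev)) (relabel Dual ` Rperp V E lev)
    = (RB V E lev :: ('v list \<Rightarrow> 'k::field) set)"
proof (cases "ring (free_alg (Vplus V lev) :: ('v list \<Rightarrow> 'k) ring)")
  case True
  let ?R = "free_alg (Vplus V lev) :: ('v list \<Rightarrow> 'k) ring"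
  have I: "ideal (RB V E lev) ?R"
    unfolding RB_def by (rule ring.genideal_ideal[OF True RB_gens_subset_carrier[OF lg]])
  have sub: "relabel Dual ` Rperp V E lev \<subseteq> (RB V E lev :: ('v list \<Rightarrow> 'k) set)"
    by (rule relabel_Rperp_subset_RB[OF lg True])
  then have "relabel Dual ` Rperp V E lev \<subseteq> carrier ?R"
    using I ideal.axioms(1) additive_subgroup.a_subset by blast
  then have "RB_gens V E lev \<subseteq> genideal ?R (relabel Dual ` Rperp V E lev)"
    using RB_gens_subset_relabel_Rperp[OF lg] ring.genideal_self[OF True] by blast
  then have "RB V E lev \<subseteq> genideal ?R (relabel Dual ` Rperp V E lev)"
    unfolding RB_def using ring.genideal_minimal[OF True] ring.genideal_ideal[OF True]
      \<open>relabel Dual ` Rperp V E lev \<subseteq> carrier ?R\<close> by blast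
  with ring.genideal_minimal[OF True I sub] show ?thesis by blast
next
  case False
  then show ?thesis unfolding RB_def by (simp add: genideal_not_ring)
qed

lemma relabel_Dual_dual_ideal:
  assumes "layered_graph V E lev"
  shows "relabel Dual ` dual_ideal V E lev = (RB V E lev :: ('v list \<Rightarrow> 'k::field) set)"
proof -
  let ?R = "free_alg (Dual ` Vplus V lev) :: ('v dualv list \<Rightarrow> 'k) ring"
  let ?S = "free_alg (Vplus V lev) :: ('v list \<Rightarrow> 'k) ring"
  have iso: "relabel Dual \<in> ring_iso ?R ?S"
    by (rule relabel_ring_iso[where \<tau> = undual]) simp_all
  have "relabel undual \<in> ring_iso (free_alg (undual ` Dual ` Vplus V lev)) ?R"
    by (rule relabel_ring_iso[where \<tau> = Dual]) simp_all
  then have iso': "relabel undual \<in> ring_iso ?S ?R" by (simp add: image_image)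
  have "relabel Dual ` genideal ?R (Rperp V E lev) = genideal ?S (relabel Dual ` Rperp V E lev)"
    by (rule genideal_image_ring_iso[OF iso iso']) (simp_all add: free_alg_def relabel_def comp_def)
  then show ?thesis unfolding dual_ideal_def genideal_relabel_Rperp[OF assms] .
qed

lemma relabel_Dual_FactRing_iso:
  assumes "layered_graph V E lev"
  shows "(\<lambda>A. relabel Dual ` A)
    \<in> ring_iso (quad_dual V E lev) (B_alg V E lev :: ('v list \<Rightarrow> 'k::field) set ring)"
  unfolding quad_dual_def B_alg_def
proof (rule FactRing_image_ring_iso[OF _ _ _ _ _ relabel_Dual_dual_ideal[OF assms]])
  show "inj (relabel Dual :: ('v dualv list \<Rightarrow> 'k) \<Rightarrow> _)"
    by (rule inj_on_inverseI[where g = "relabel undual"]) (simp add: relabel_def comp_def)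
  have "relabel Dual \<in> ring_iso (free_alg (Dual ` Vplus V lev) :: ('v dualv list \<Rightarrow> 'k) ring)
      (free_alg (Vplus V lev))"
    by (rule relabel_ring_iso[where \<tau> = undual]) simp_all
  then show "relabel Dual ` carrier (free_alg (Dual ` Vplus V lev) :: ('v dualv list \<Rightarrow> 'k) ring)
      = carrier (free_alg (Vplus V lev))"
    unfolding ring_iso_def bij_betw_def by blast
qed (simp_all add: relabel_free_alg_mult relabel_free_alg_add, simp add: free_alg_def relabel_def)

theorem mainTheorem7:
  fixes V :: "'v set" and E :: "('v \<times> 'v) set" and lev :: "'v \<Rightarrow> nat"
  assumes "layered_graph V E lev"
    and "uniform V E lev"
  shows "\<exists>\<phi>. \<phi> \<in> ring_iso (quad_dual V E lev :: ('v dualv list \<Rightarrow> 'k::field) set ring)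
                          (B_alg V E lev :: ('v list \<Rightarrow> 'k) set ring)
          \<and> (\<forall>v \<in> Vplus V lev.
               \<phi> (dual_ideal V E lev +>\<^bsub>free_alg (Dual ` Vplus V lev)\<^esub> mon [Dual v])
                 = RB V E lev +>\<^bsub>free_alg (Vplus V lev)\<^esub> mon [v])
          \<and> (\<forall>c::'k. \<phi> (dual_ideal V E lev +>\<^bsub>free_alg (Dual ` Vplus V lev)\<^esub> fa_const c)
                 = RB V E lev +>\<^bsub>free_alg (Vplus V lev)\<^esub> fa_const c)"
proof -
  have coset: "relabel Dual ` (dual_ideal V E lev +>\<^bsub>free_alg (Dual ` Vplus V lev)\<^esub> f)
      = RB V E lev +>\<^bsub>free_alg (Vplus V lev)\<^esub> relabel Dual f" for f :: "'v dualv list \<Rightarrow> 'k"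
    using image_a_r_coset[of "relabel Dual" "free_alg (Dual ` Vplus V lev) :: ('v dualv list \<Rightarrow> 'k) ring"
        "free_alg (Vplus V lev)", OF relabel_free_alg_add] relabel_Dual_dual_ideal[OF assms(1), where 'k = 'k] by simp
  have "relabel Dual (mon [Dual v] :: 'v dualv list \<Rightarrow> 'k) = mon [v]"
    and "relabel Dual (fa_const c :: 'v dualv list \<Rightarrow> 'k) = fa_const c" for v c
    by (auto simp: relabel_def mon_def fa_const_def)
  with coset relabel_Dual_FactRing_iso[OF assms(1)] show ?thesis
    by (intro exI[of _ "\<lambda>A. relabel Dual ` A"]) simp
qed

end
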